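(* Let $m,k,l$ be nonnegative integers with $k+l\le m$, $\alpha,\beta>-1$, and let $f$ be a function on $[0,1]$ with $\langle f,f\rangle<\infty$ which has derivatives $f^{(i)}(0)$ for $0\le i\le k-1$ and $f^{(i)}(1)$ for $0\le i\le l-1$. Consider the problem of finding $P_m(t)=\sum_{i=0}^m p_iB^m_i(t)$ minimizing $\|f-P_m\|^2=\langle f-P_m,f-P_m\rangle$ subject to $P_m^{(i)}(0)=f^{(i)}(0)$ ($i=0,\ldots,k-1$) and $P_m^{(j)}(1)=f^{(j)}(1)$ ($j=0,\ldots,l-1$). The coefficients of the minimizer are given by \[ p_i=\frac{(m-i)!}{m!}f^{(i)}(0)-\sum_{j=0}^{i-1}(-1)^{i+j}\binom ij p_j\qquad(i=0,1,\ldots,k-1), \] \[ p_{m-i}=(-1)^i\frac{(m-i)!}{m!}f^{(i)}(1)-\sum_{j=1}^{i}(-1)^j\binom ij p_{m-i+j}\qquad(i=0,1,\ldots,l-1), \] \[ p_i=\sum_{j=k}^{m-l}C_{ij}(m,k,l,\alpha,\beta)\,\langle f,B^m_j\rangle-\Big(\sum_{j=0}^{k-1}+\sum_{j=m-l+1}^{m}\Big)p_j\,K_{ij}\qquad(i=k,k+1,\ldots,m-l), \] where $C_{ij}(m,k,l,\alpha,\beta)$ are the B\'ezier coefficients of the constrained dual Bernstein polynomials, $D^{(m,k,l)}_i(x;\alpha,\beta)=\sum_{j=k}^{m-l}C_{ij}(m,k,l,\alpha,\beta)B^m_j(x)$, and for $k\le i\le m-l$ and $j\in\{0,\ldots,k-1\}\cup\{m-l+1,\ldots,m\}$,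 \[ K_{ij}=\binom mj\binom mi^{-1}\frac{(-1)^{i-k}(k-j)_{m-k-l+1}}{(i-j)\,(i-k)!\,(m-l-i)!}\cdot\frac{(\alpha+l+1)_{m-j}(\beta+k+1)_j}{(\alpha+l+1)_{m-i}(\beta+k+1)_i} \] (which equals $\langle B^m_j,D^{(m,k,l)}_i\rangle$).
   Context: For $\alpha,\beta>-1$ define $\langle f,g\rangle:=\int_0^1(1-x)^{\alpha}x^{\beta}f(x)g(x)\,dx$ and $\|g\|^2=\langle g,g\rangle$. Bernstein polynomials: $B^m_i(x)=\binom mi x^i(1-x)^{m-i}$. For $k+l\le m$, $\Pi_m^{(k,l)}$ is the space of polynomials $P$ of degree $\le m$ with $P^{(i)}(0)=0$ for $0\le i\le k-1$ and $P^{(j)}(1)=0$ for $0\le j\le l-1$; it has basis $B^m_k,\ldots,B^m_{m-l}$. The constrained dual Bernstein polynomials $D^{(m,k,l)}_i(x;\alpha,\beta)$, $k\le i\le m-l$, are the unique elements of $\Pi_m^{(k,l)}$ with $\langle D^{(m,k,l)}_i,B^m_j\rangle=\delta_{ij}$ for $i,j=k,\ldots,m-l$. Notation: $(c)_k:=\prod_{j=0}^{k-1}(c+j)$, $(c)_0=1$. *)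

theory Defs
  imports "HOL-Analysis.Analysis" "HOL-Computational_Algebra.Polynomial"
begin

definition jweight :: "real \<Rightarrow> real \<Rightarrow> real \<Rightarrow> real" where
  "jweight \<alpha> \<beta> x = (1 - x) powr \<alpha> * x powr \<beta>"

definition wip :: "real \<Rightarrow> real \<Rightarrow> (real \<Rightarrow> real) \<Rightarrow> (real \<Rightarrow> real) \<Rightarrow> real" where
  "wip \<alpha> \<beta> f g = set_lebesgue_integral lborel {0..1} (\<lambda>x. jweight \<alpha> \<beta> x * f x * g x)"

definition bern :: "nat \<Rightarrow> nat \<Rightarrow> real \<Rightarrow> real" where
  "bern m i x = real (m choose i) * x ^ i * (1 - x) ^ (m - i)"

definition bern_poly :: "nat \<Rightarrow> nat \<Rightarrow> real poly" where
  "bern_poly m i = smult (real (m choose i)) (monom 1 i * [:1, -1:] ^ (m - i))"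

definition bezier_poly :: "nat \<Rightarrow> (nat \<Rightarrow> real) \<Rightarrow> real poly" where
  "bezier_poly m p = (\<Sum>i\<le>m. smult (p i) (bern_poly m i))"

text \<open>Bezier coefficients C_ij(m,k,l,alpha,beta) of the constrained dual Bernstein
  polynomial D^(m,k,l)_i: the unique coefficient vector c supported on {k..m-l}
  with <sum_h c_h B^m_h, B^m_j> = delta_ij for j = k..m-l.\<close>
definition dualC :: "nat \<Rightarrow> nat \<Rightarrow> nat \<Rightarrow> real \<Rightarrow> real \<Rightarrow> nat \<Rightarrow> nat \<Rightarrow> real" where
  "dualC m k l \<alpha> \<beta> i = (THE c.
      (\<forall>h. h \<notin> {k..m-l} \<longrightarrow> c h = 0) \<and>
      (\<forall>j\<in>{k..m-l}. wip \<alpha> \<beta> (\<lambda>x. \<Sum>h=k..m-l. c h * bern m h x) (bern m j)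
                      = (if i = j then 1 else 0)))"

definition Kcoef :: "nat \<Rightarrow> nat \<Rightarrow> nat \<Rightarrow> real \<Rightarrow> real \<Rightarrow> nat \<Rightarrow> nat \<Rightarrow> real" where
  "Kcoef m k l \<alpha> \<beta> i j =
     real (m choose j) / real (m choose i) *
     ((-1) ^ (i - k) * pochhammer (real k - real j) (m - k - l + 1)
        / ((real i - real j) * fact (i - k) * fact (m - l - i))) *
     ((pochhammer (\<alpha> + real l + 1) (m - j) * pochhammer (\<beta> + real k + 1) j)
        / (pochhammer (\<alpha> + real l + 1) (m - i) * pochhammer (\<beta> + real k + 1) i))"

text \<open>Admissible coefficient vectors: the Bezier polynomial matches the prescribed
  derivative values a i = f^(i)(0) (i<k) and b j = f^(j)(1) (j<l).\<close>
definition admissible :: "nat \<Rightarrow> nat \<Rightarrow> nat \<Rightarrow> (nat \<Rightarrow> real) \<Rightarrow> (nat \<Rightarrow> real) \<Rightarrow> (nat \<Rightarrow> real) \<Rightarrow> bool" where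
  "admissible m k l a b p \<longleftrightarrow>
     (\<forall>i<k. poly ((pderiv ^^ i) (bezier_poly m p)) 0 = a i) \<and>
     (\<forall>j<l. poly ((pderiv ^^ j) (bezier_poly m p)) 1 = b j)"

end

theory Submission
  imports Defs "Jordan_Normal_Form.Determinant"
begin

(* Write P = sum_i p_i B^m_i for the minimiser and S = {k..m-l} for the free indices.
   (1) The r-th derivative of a Bezier polynomial at 0 is
       m!/(m-r)! * sum_{j<=r} (-1)^(r-j) binom(r,j) p_j, and symmetrically at 1 (reflect
       x to 1-x).  Solving these triangular systems for p_r and p_{m-r} gives the first
       two formulas.
   (2) Changing a free coefficient p_j (j in S) does not affect the constraints, so
       optimality forces the normal equations <f - P, B^m_j> = 0, i.e.
       <f, B^m_j> = sum_h p_h G_hj with the Gram matrix G_hj = <B^m_h, B^m_j>.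
   (3) G is a Beta integral with an explicit product form; by Lagrange interpolation at
       the nodes of S every outer row satisfies G_ht = sum_{i in S} K_ih G_it (t in S).
   (4) G restricted to S is positive definite, so the dual coefficients C_ij exist
       and are unique; by (3), sum_{j in S} C_ij G_hj is delta_ih for h in S and K_ih
       for the outer indices h.  Multiplying (2) by C_ij and summing over j in S gives
       the third formula. *)


section \<open>Bezier polynomials and their derivatives at the end points\<close>

lemma poly_bern_poly [simp]: "poly (bern_poly m i) x = bern m i x"
  by (simp add: bern_poly_def bern_def poly_monom)

lemma poly_bezier_poly: "poly (bezier_poly m p) x = (\<Sum>i\<le>m. p i * bern m i x)"
  by (simp add: bezier_poly_def poly_sum)

lemma sum_atMost_last:
  fixes g :: "nat \<Rightarrow> 'a :: comm_monoid_add"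
  shows "(\<Sum>j\<le>i. g j) = g i + (\<Sum>j<i. g j)"
proof -
  have "{..i} = insert i {..<i}"
    by auto
  then show ?thesis by simp
qed

lemma coeff_higher_pderiv:
  fixes P :: "'a :: {comm_semiring_1, semiring_no_zero_divisors} poly"
  shows "coeff ((pderiv ^^ r) P) n = pochhammer (of_nat (Suc n)) r * coeff P (n + r)"
proof (induction r arbitrary: n)
  case (Suc r)
  have "coeff ((pderiv ^^ Suc r) P) n = of_nat (Suc n) * coeff ((pderiv ^^ r) P) (Suc n)"
    by (simp add: coeff_pderiv)
  also have "\<dots> = pochhammer (of_nat (Suc n)) (Suc r) * coeff P (n + Suc r)"
    by (simp add: Suc.IH pochhammer_rec add.commute mult.assoc)
  finally show ?case .
qed simp

lemma poly_higher_pderiv_at_0: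
  fixes P :: "'a :: {comm_semiring_1, semiring_no_zero_divisors, semiring_char_0} poly"
  shows "poly ((pderiv ^^ r) P) 0 = fact r * coeff P r"
  by (simp add: poly_0_coeff_0 coeff_higher_pderiv pochhammer_fact)

lemma coeff_one_minus_x_power:
  "coeff ([:1, -1:] ^ n :: 'a :: comm_ring_1 poly) s = of_nat (n choose s) * (-1) ^ s"
proof (induction n arbitrary: s)
  case 0
  then show ?case by (cases s) auto
next
  case (Suc n)
  have eq: "[:1, -1:] ^ Suc n = pCons 0 (Polynomial.smult (-1) ([:1, -1:] ^ n)) + ([:1, -1:] ^ n :: 'a poly)"
    by (simp add: mult_pCons_left add.commute)
  show ?case
    by (cases s) (simp_all add: eq Suc.IH algebra_simps)
qed

lemma coeff_bezier_poly:
  assumes "r \<le> m"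
  shows "coeff (bezier_poly m p) r =
     (\<Sum>i\<le>r. p i * (real (m choose r) * real (r choose i) * (-1) ^ (r - i)))"
proof -
  have coeff_bern: "coeff (bern_poly m i) r =
     (if i \<le> r then real (m choose i) * real ((m - i) choose (r - i)) * (-1) ^ (r - i) else 0)" for i
    by (simp add: bern_poly_def coeff_monom_mult coeff_one_minus_x_power)
  have "coeff (bezier_poly m p) r = (\<Sum>i\<le>m. p i * coeff (bern_poly m i) r)"
    by (simp add: bezier_poly_def coeff_sum)
  also have "\<dots> = (\<Sum>i\<le>r. p i * coeff (bern_poly m i) r)"
    using assms by (intro sum.mono_neutral_right) (auto simp: coeff_bern)
  also have "\<dots> = (\<Sum>i\<le>r. p i * (real (m choose r) * real (r choose i) * (-1) ^ (r - i)))"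
  proof (intro sum.cong refl)
    fix i assume i: "i \<in> {..r}"
    have "(m choose r) * (r choose i) = (m choose i) * ((m - i) choose (r - i))"
      using i assms by (intro choose_mult) auto
    then have "real (m choose i) * real ((m - i) choose (r - i)) = real (m choose r) * real (r choose i)"
      by (metis of_nat_mult)
    then show "p i * coeff (bern_poly m i) r = p i * (real (m choose r) * real (r choose i) * (-1) ^ (r - i))"
      using i by (simp add: coeff_bern)
  qed
  finally show ?thesis .
qed

lemma bezier_higher_deriv_at_0:
  assumes "r \<le> m"
  shows "poly ((pderiv ^^ r) (bezier_poly m p)) 0 =
     fact m / fact (m - r) * (\<Sum>j\<le>r. (-1) ^ (r - j) * real (r choose j) * p j)"
proof -
  have "fact m / fact (m - r) = fact r * real (m choose r)"
    using assms by (simp add: binomial_fact)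
  then show ?thesis
    unfolding poly_higher_pderiv_at_0 coeff_bezier_poly[OF assms]
    by (simp add: sum_distrib_left mult_ac)
qed

lemma bezier_poly_reflect:
  "pcompose (bezier_poly m p) [:1, -1:] = bezier_poly m (\<lambda>i. p (m - i))"
proof (rule poly_eq_poly_eq_iff[THEN iffD1], rule ext)
  fix x :: real
  have "bern m i (1 - x) = bern m (m - i) x" if "i \<le> m" for i
    using that by (simp add: bern_def binomial_symmetric[of i m] mult_ac)
  then have "poly (pcompose (bezier_poly m p) [:1, -1:]) x = (\<Sum>i\<le>m. p i * bern m (m - i) x)"
    by (simp add: poly_pcompose poly_bezier_poly)
  also have "\<dots> = (\<Sum>i\<le>m. p (m - i) * bern m i x)"
    by (rule sum.reindex_bij_witness[of _ "\<lambda>i. m - i" "\<lambda>i. m - i"]) auto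
  finally show "poly (pcompose (bezier_poly m p) [:1, -1:]) x = poly (bezier_poly m (\<lambda>i. p (m - i))) x"
    by (simp add: poly_bezier_poly)
qed

lemma higher_pderiv_reflect:
  "(pderiv ^^ r) (pcompose P [:1, -1:]) = Polynomial.smult ((-1) ^ r) (pcompose ((pderiv ^^ r) (P :: real poly)) [:1, -1:])"
  by (induction r) (simp_all add: pderiv_smult pderiv_pcompose pderiv_pCons)

lemma bezier_higher_deriv_at_1:
  assumes "r \<le> m"
  shows "poly ((pderiv ^^ r) (bezier_poly m p)) 1 =
     (-1) ^ r * (fact m / fact (m - r) * (\<Sum>j\<le>r. (-1) ^ (r - j) * real (r choose j) * p (m - j)))"
proof -
  have "poly ((pderiv ^^ r) (bezier_poly m (\<lambda>i. p (m - i)))) 0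
          = (-1) ^ r * poly ((pderiv ^^ r) (bezier_poly m p)) 1"
    by (simp add: bezier_poly_reflect[symmetric] higher_pderiv_reflect poly_pcompose)
  moreover have "(-1::real) ^ r * (-1) ^ r = 1"
    by (simp add: power_mult_distrib[symmetric])
  ultimately have "poly ((pderiv ^^ r) (bezier_poly m p)) 1
                     = (-1) ^ r * poly ((pderiv ^^ r) (bezier_poly m (\<lambda>i. p (m - i)))) 0"
    by (metis mult.assoc mult_1)
  then show ?thesis by (simp add: bezier_higher_deriv_at_0[OF assms])
qed

lemma admissible_coeff_at_0:
  assumes adm: "admissible m k l a b p" and i: "i < k" and km: "k \<le> m"
  shows "p i = fact (m - i) / fact m * a i - (\<Sum>j<i. (-1) ^ (i + j) * real (i choose j) * p j)"
proof -
  have "a i = fact m / fact (m - i) * (\<Sum>j\<le>i. (-1) ^ (i - j) * real (i choose j) * p j)"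
    using adm i km bezier_higher_deriv_at_0[of i m p] unfolding admissible_def by auto
  also have "(\<Sum>j\<le>i. (-1) ^ (i - j) * real (i choose j) * p j) =
       p i + (\<Sum>j<i. (-1) ^ (i + j) * real (i choose j) * p j)"
    by (simp add: sum_atMost_last neg_one_power_add_eq_neg_one_power_diff)
  finally show ?thesis by (simp add: field_simps)
qed

lemma admissible_coeff_at_1:
  assumes adm: "admissible m k l a b p" and i: "i < l" and lm: "l \<le> m"
  shows "p (m - i) = (-1) ^ i * fact (m - i) / fact m * b i
           - (\<Sum>j=1..i. (-1) ^ j * real (i choose j) * p (m - i + j))"
proof -
  have im: "i \<le> m" using i lm by simp
  have "b i = (-1) ^ i * (fact m / fact (m - i) * (\<Sum>j\<le>i. (-1) ^ (i - j) * real (i choose j) * p (m - j)))"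
    using adm i bezier_higher_deriv_at_1[OF im, of p] unfolding admissible_def by auto
  also have "(\<Sum>j\<le>i. (-1) ^ (i - j) * real (i choose j) * p (m - j)) =
       (\<Sum>j\<le>i. (-1) ^ j * real (i choose j) * p (m - i + j))"
    by (rule sum.reindex_bij_witness[of _ "\<lambda>j. i - j" "\<lambda>j. i - j"])
       (use im in \<open>auto simp: binomial_symmetric[symmetric]\<close>)
  also have "\<dots> = p (m - i) + (\<Sum>j=1..i. (-1) ^ j * real (i choose j) * p (m - i + j))"
    by (simp add: atMost_atLeast0 sum.atLeast_Suc_atMost)
  finally have "(-1) ^ i * b i = ((-1) ^ i * (-1) ^ i) * (fact m / fact (m - i)
                  * (p (m - i) + (\<Sum>j=1..i. (-1) ^ j * real (i choose j) * p (m - i + j))))"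
    by (simp only: mult.assoc)
  moreover have "(-1::real) ^ i * (-1) ^ i = 1"
    by (simp add: power_mult_distrib[symmetric])
  ultimately show ?thesis by (simp add: field_simps)
qed

text \<open>Changing a free coefficient p_j, k \<le> j \<le> m - l, preserves admissibility, since the
  derivatives of order < k at 0 and of order < l at 1 do not involve p_j.\<close>
lemma admissible_change_free_coeff:
  assumes adm: "admissible m k l a b p" and j: "j \<in> {k..m-l}" and klm: "k + l \<le> m"
  shows "admissible m k l a b (\<lambda>s. p s + (if s = j then t else 0))"
  unfolding admissible_def
proof (intro conjI allI impI)
  fix i assume i: "i < k"
  have "(\<Sum>s\<le>i. (-1) ^ (i - s) * real (i choose s) * (p s + (if s = j then t else 0)))
      = (\<Sum>s\<le>i. (-1) ^ (i - s) * real (i choose s) * p s)"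
    using i j by (intro sum.cong) auto
  with adm i klm show "poly ((pderiv ^^ i) (bezier_poly m (\<lambda>s. p s + (if s = j then t else 0)))) 0 = a i"
    unfolding admissible_def by (simp add: bezier_higher_deriv_at_0)
next
  fix i assume i: "i < l"
  have "(\<Sum>s\<le>i. (-1) ^ (i - s) * real (i choose s) * (p (m - s) + (if m - s = j then t else 0)))
      = (\<Sum>s\<le>i. (-1) ^ (i - s) * real (i choose s) * p (m - s))"
    using i j klm by (intro sum.cong) auto
  with adm i klm show "poly ((pderiv ^^ i) (bezier_poly m (\<lambda>s. p s + (if s = j then t else 0)))) 1 = b i"
    unfolding admissible_def by (simp add: bezier_higher_deriv_at_1)
qed

lemma poly_bezier_poly_change_coeff:
  assumes "j \<le> m"
  shows "poly (bezier_poly m (\<lambda>s. p s + (if s = j then t else 0))) x = poly (bezier_poly m p) x + t * bern m j x"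
proof -
  have "poly (bezier_poly m (\<lambda>s. p s + (if s = j then t else 0))) x
          = (\<Sum>i\<le>m. p i * bern m i x) + (\<Sum>i\<le>m. if i = j then t * bern m i x else 0)"
    unfolding poly_bezier_poly sum.distrib[symmetric] by (intro sum.cong refl) (simp add: algebra_simps)
  with assms show ?thesis
    by (simp add: poly_bezier_poly)
qed

text \<open>The Bernstein polynomials B^m_0, ..., B^m_m are linearly independent: the derivative
  formula at 0 is triangular in the coefficients.\<close>
lemma bezier_poly_eq_0D:
  assumes "bezier_poly m c = 0" and "i \<le> m"
  shows "c i = 0"
  using assms(2)
proof (induction i rule: less_induct)
  case (less i)
  have "(pderiv ^^ i) (0 :: real poly) = 0"
    by (induction i) auto
  then have "0 = poly ((pderiv ^^ i) (bezier_poly m c)) 0"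
    using assms(1) by simp
  also have "\<dots> = fact m / fact (m - i) * (\<Sum>j\<le>i. (-1) ^ (i - j) * real (i choose j) * c j)"
    by (rule bezier_higher_deriv_at_0) (use less in auto)
  also have "(\<Sum>j\<le>i. (-1) ^ (i - j) * real (i choose j) * c j) = c i"
    using less by (simp add: sum_atMost_last)
  finally show ?case by simp
qed


section \<open>The weighted integral over [0,1]\<close>

definition wintegrable :: "real \<Rightarrow> real \<Rightarrow> (real \<Rightarrow> real) \<Rightarrow> bool" where
  "wintegrable \<alpha> \<beta> h \<longleftrightarrow> integrable lborel (\<lambda>x. indicator {0..1::real} x * (jweight \<alpha> \<beta> x * h x))"

definition wintegral :: "real \<Rightarrow> real \<Rightarrow> (real \<Rightarrow> real) \<Rightarrow> real" where
  "wintegral \<alpha> \<beta> h = integral\<^sup>L lborel (\<lambda>x. indicator {0..1::real} x * (jweight \<alpha> \<beta> x * h x))"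

lemma wip_eq_wintegral: "wip \<alpha> \<beta> f g = wintegral \<alpha> \<beta> (\<lambda>x. f x * g x)"
  by (simp add: wip_def wintegral_def set_lebesgue_integral_def mult.assoc)

lemma jweight_nonneg: "jweight \<alpha> \<beta> x \<ge> 0"
  unfolding jweight_def by simp

lemma wintegrable_add: "wintegrable \<alpha> \<beta> f \<Longrightarrow> wintegrable \<alpha> \<beta> g \<Longrightarrow> wintegrable \<alpha> \<beta> (\<lambda>x. f x + g x)"
  unfolding wintegrable_def by (drule (1) Bochner_Integration.integrable_add) (simp add: algebra_simps)

lemma wintegrable_diff: "wintegrable \<alpha> \<beta> f \<Longrightarrow> wintegrable \<alpha> \<beta> g \<Longrightarrow> wintegrable \<alpha> \<beta> (\<lambda>x. f x - g x)"
  unfolding wintegrable_def by (drule (1) Bochner_Integration.integrable_diff) (simp add: algebra_simps)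

lemma wintegrable_cmult:
  assumes "wintegrable \<alpha> \<beta> f"
  shows "wintegrable \<alpha> \<beta> (\<lambda>x. c * f x)"
proof -
  have "integrable lborel (\<lambda>x. c * (indicator {0..1::real} x * (jweight \<alpha> \<beta> x * f x)))"
    using assms unfolding wintegrable_def by (rule integrable_mult_right)
  then show ?thesis
    unfolding wintegrable_def by (simp add: algebra_simps)
qed

lemma wintegrable_sum:
  "(\<And>i. i \<in> I \<Longrightarrow> wintegrable \<alpha> \<beta> (f i)) \<Longrightarrow> wintegrable \<alpha> \<beta> (\<lambda>x. \<Sum>i\<in>I. f i x)"
  unfolding wintegrable_def by (drule Bochner_Integration.integrable_sum) (simp add: sum_distrib_left)

lemma wintegral_add:
  "wintegrable \<alpha> \<beta> f \<Longrightarrow> wintegrable \<alpha> \<beta> g \<Longrightarrow> wintegral \<alpha> \<beta> (\<lambda>x. f x + g x) = wintegral \<alpha> \<beta> f + wintegral \<alpha> \<beta> g"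
  unfolding wintegrable_def wintegral_def
  by (subst Bochner_Integration.integral_add[symmetric]) (auto simp: algebra_simps)

lemma wintegral_diff:
  "wintegrable \<alpha> \<beta> f \<Longrightarrow> wintegrable \<alpha> \<beta> g \<Longrightarrow> wintegral \<alpha> \<beta> (\<lambda>x. f x - g x) = wintegral \<alpha> \<beta> f - wintegral \<alpha> \<beta> g"
  unfolding wintegrable_def wintegral_def
  by (subst Bochner_Integration.integral_diff[symmetric]) (auto simp: algebra_simps)

lemma wintegral_cmult: "wintegral \<alpha> \<beta> (\<lambda>x. c * f x) = c * wintegral \<alpha> \<beta> f"
  unfolding wintegral_def by (subst integral_mult_right_zero[symmetric]) (simp add: algebra_simps)

lemma wintegral_sum:
  "(\<And>i. i \<in> I \<Longrightarrow> wintegrable \<alpha> \<beta> (f i)) \<Longrightarrow> wintegral \<alpha> \<beta> (\<lambda>x. \<Sum>i\<in>I. f i x) = (\<Sum>i\<in>I. wintegral \<alpha> \<beta> (f i))"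
  unfolding wintegrable_def wintegral_def
  by (subst Bochner_Integration.integral_sum[symmetric]) (auto simp: sum_distrib_left)

lemma wintegral_square_nonneg: "wintegral \<alpha> \<beta> (\<lambda>x. h x * h x) \<ge> 0"
  unfolding wintegral_def
  by (intro integral_nonneg_AE AE_I2) (auto simp: jweight_nonneg indicator_def)

text \<open>For \<alpha>, \<beta> > -1 the weight is integrable (a Beta integral), hence so is its product
  with any function that is continuous on the real line.\<close>
lemma wintegrable_continuous:
  assumes \<alpha>: "\<alpha> > -1" and \<beta>: "\<beta> > -1" and g: "continuous_on UNIV g"
  shows "wintegrable \<alpha> \<beta> g"
proof -
  have "set_integrable lborel {0..1} (\<lambda>t. t powr ((\<beta> + 1) - 1) * (1 - t) powr ((\<alpha> + 1) - 1))"
    by (rule integrable_Beta) (use \<alpha> \<beta> in auto)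
  then have weight: "integrable lborel (\<lambda>x. indicator {0..1} x * jweight \<alpha> \<beta> x)"
    unfolding set_integrable_def jweight_def by (simp add: mult_ac)
  have "bounded (g ` {0..1})"
    using compact_continuous_image[OF continuous_on_subset[OF g]] by (simp add: compact_imp_bounded)
  then obtain B where "\<forall>y\<in>g ` {0..1}. norm y \<le> B"
    by (auto simp: bounded_iff)
  then have B: "\<And>x. x \<in> {0..1} \<Longrightarrow> \<bar>g x\<bar> \<le> B"
    by auto
  have "integrable lborel (\<lambda>x. B * (indicator {0..1} x * jweight \<alpha> \<beta> x))"
    using weight by (rule integrable_mult_right)
  then show ?thesis
    unfolding wintegrable_def
  proof (rule Bochner_Integration.integrable_bound)
    show "(\<lambda>x. indicator {0..1} x * (jweight \<alpha> \<beta> x * g x)) \<in> borel_measurable lborel"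
      using borel_measurable_continuous_onI[OF g] unfolding jweight_def by measurable
    have "\<bar>jweight \<alpha> \<beta> x * g x\<bar> \<le> \<bar>B * jweight \<alpha> \<beta> x\<bar>" if "x \<in> {0..1}" for x
      using B[OF that] jweight_nonneg[of \<alpha> \<beta> x] by (simp add: abs_mult mult_right_mono mult.commute)
    then show "AE x in lborel. norm (indicator {0..1} x * (jweight \<alpha> \<beta> x * g x))
            \<le> norm (B * (indicator {0..1} x * jweight \<alpha> \<beta> x))"
      by (intro AE_I2) (simp add: indicator_def)
  qed
qed

text \<open>Weighted square integrability is closed under products (2|uv| \<le> u^2 + v^2).\<close>
lemma wintegrable_product:
  fixes h1 h2 :: "real \<Rightarrow> real"
  assumes m1: "h1 \<in> borel_measurable borel" and m2: "h2 \<in> borel_measurable borel"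
    and i1: "wintegrable \<alpha> \<beta> (\<lambda>x. h1 x * h1 x)" and i2: "wintegrable \<alpha> \<beta> (\<lambda>x. h2 x * h2 x)"
  shows "wintegrable \<alpha> \<beta> (\<lambda>x. h1 x * h2 x)"
proof -
  have "wintegrable \<alpha> \<beta> (\<lambda>x. h1 x * h1 x + h2 x * h2 x)"
    by (rule wintegrable_add[OF i1 i2])
  then show ?thesis
    unfolding wintegrable_def
  proof (rule Bochner_Integration.integrable_bound)
    show "(\<lambda>x. indicator {0..1} x * (jweight \<alpha> \<beta> x * (h1 x * h2 x))) \<in> borel_measurable lborel"
      using m1 m2 unfolding jweight_def by measurable
    have "\<bar>h1 x * h2 x\<bar> \<le> h1 x * h1 x + h2 x * h2 x" for x
    proof -
      have "2 * (\<bar>h1 x\<bar> * \<bar>h2 x\<bar>) \<le> h1 x * h1 x + h2 x * h2 x"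
        using sum_squares_bound[of "\<bar>h1 x\<bar>" "\<bar>h2 x\<bar>"] by (simp add: power2_eq_square mult.assoc)
      moreover have "0 \<le> \<bar>h1 x\<bar> * \<bar>h2 x\<bar>"
        by simp
      ultimately show ?thesis
        unfolding abs_mult by linarith
    qed
    then show "AE x in lborel. norm (indicator {0..1} x * (jweight \<alpha> \<beta> x * (h1 x * h2 x)))
          \<le> norm (indicator {0..1::real} x * (jweight \<alpha> \<beta> x * (h1 x * h1 x + h2 x * h2 x)))"
      using jweight_nonneg[of \<alpha> \<beta>]
      by (intro AE_I2) (auto simp: indicator_def abs_mult mult_left_mono)
  qed
qed

text \<open>Positive definiteness on polynomials: the weight is positive on (0,1) and a nonzero
  polynomial has only finitely many roots.\<close>
lemma wintegral_poly_square_eq_0: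
  assumes \<alpha>: "\<alpha> > -1" and \<beta>: "\<beta> > -1" and z: "wintegral \<alpha> \<beta> (\<lambda>x. poly q x * poly q x) = 0"
  shows "q = 0"
proof (rule ccontr)
  assume q: "q \<noteq> 0"
  have int: "integrable lborel (\<lambda>x. indicator {0..1::real} x * (jweight \<alpha> \<beta> x * (poly q x * poly q x)))"
    using wintegrable_continuous[OF \<alpha> \<beta>, of "\<lambda>x. poly q x * poly q x"]
    by (simp add: wintegrable_def continuous_intros)
  have "AE x in lborel. indicator {0..1::real} x * (jweight \<alpha> \<beta> x * (poly q x * poly q x)) = 0"
    using z unfolding wintegral_def
    by (subst (asm) integral_nonneg_eq_0_iff_AE[OF int]) (auto intro!: AE_I2 simp: jweight_nonneg indicator_def)
  moreover have "AE x in lborel. x \<notin> {x. poly q x = 0}"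
    by (intro AE_not_in countable_imp_null_set_lborel countable_finite poly_roots_finite q)
  ultimately have "AE x in lborel. x \<notin> {0<..<1::real}"
  proof eventually_elim
    case (elim x)
    show ?case
    proof
      assume x: "x \<in> {0<..<1}"
      then have "jweight \<alpha> \<beta> x > 0"
        by (simp add: jweight_def)
      moreover have "poly q x * poly q x > 0"
        using elim(2) by (auto simp: zero_less_mult_iff linorder_neq_iff)
      ultimately show False
        using elim(1) x by (simp add: indicator_def)
    qed
  qed
  then have "emeasure lborel {0<..<1::real} = 0"
    by (subst (asm) AE_iff_measurable[of "{0<..<1}"]) auto
  then show False by simp
qed

lemma wintegral_beta:
  assumes \<alpha>: "\<alpha> > -1" and \<beta>: "\<beta> > -1"
  shows "wintegral \<alpha> \<beta> (\<lambda>x. x ^ p * (1 - x) ^ q) = Beta (\<beta> + real p + 1) (\<alpha> + real q + 1)"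
proof -
  define F where "F t = t powr ((\<beta> + real p + 1) - 1) * (1 - t) powr ((\<alpha> + real q + 1) - 1)" for t :: real
  have pos1: "\<beta> + real p + 1 > 0" and pos2: "\<alpha> + real q + 1 > 0"
    using \<alpha> \<beta> by auto
  have F_int: "set_integrable lborel {0..1} F"
    unfolding F_def by (rule integrable_Beta[OF pos1 pos2])
  have F_has_int: "(F has_integral Beta (\<beta> + real p + 1) (\<alpha> + real q + 1)) {0..1}"
    unfolding F_def by (rule has_integral_Beta_real[OF pos1 pos2])
  have pointwise: "jweight \<alpha> \<beta> x * (x ^ p * (1 - x) ^ q) = F x" if x: "x \<in> {0..1}" for x
  proof -
    consider "x = 0" | "x = 1" | "0 < x \<and> x < 1"
      using x by fastforce
    then show ?thesis
    proof cases
      case 3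
      then show ?thesis
        by (simp add: F_def jweight_def powr_add powr_realpow[symmetric] mult_ac)
    qed (use pos1 pos2 in \<open>auto simp: F_def jweight_def\<close>)
  qed
  have "wintegral \<alpha> \<beta> (\<lambda>x. x ^ p * (1 - x) ^ q) = integral\<^sup>L lborel (\<lambda>x. indicator {0..1} x *\<^sub>R F x)"
    unfolding wintegral_def
    by (intro Bochner_Integration.integral_cong refl) (auto simp: indicator_def pointwise)
  also have "\<dots> = integral {0..1} F"
    using set_borel_integral_eq_integral(2)[OF F_int] by (simp add: set_lebesgue_integral_def)
  also have "\<dots> = Beta (\<beta> + real p + 1) (\<alpha> + real q + 1)"
    using F_has_int by (simp add: integral_unique)
  finally show ?thesis .
qed


section \<open>The Gram matrix of the Bernstein basis\<close>

definition bern_gram :: "nat \<Rightarrow> real \<Rightarrow> real \<Rightarrow> nat \<Rightarrow> nat \<Rightarrow> real" where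
  "bern_gram m \<alpha> \<beta> h j = wintegral \<alpha> \<beta> (\<lambda>x. bern m h x * bern m j x)"

lemma bern_gram_sym: "bern_gram m \<alpha> \<beta> h j = bern_gram m \<alpha> \<beta> j h"
  by (simp add: bern_gram_def mult.commute)

lemma continuous_on_bern: "continuous_on UNIV (bern m j)"
  unfolding bern_def[abs_def] by (intro continuous_intros)

lemma wintegrable_bern_product:
  "\<alpha> > -1 \<Longrightarrow> \<beta> > -1 \<Longrightarrow> wintegrable \<alpha> \<beta> (\<lambda>x. bern m h x * bern m j x)"
  by (intro wintegrable_continuous continuous_on_mult continuous_on_bern)

lemma wip_bern_combination:
  assumes \<alpha>: "\<alpha> > -1" and \<beta>: "\<beta> > -1"
  shows "wip \<alpha> \<beta> (\<lambda>x. \<Sum>h\<in>I. c h * bern m h x) (bern m j) = (\<Sum>h\<in>I. c h * bern_gram m \<alpha> \<beta> h j)"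
proof -
  have "(\<lambda>x. (\<Sum>h\<in>I. c h * bern m h x) * bern m j x) = (\<lambda>x. \<Sum>h\<in>I. c h * (bern m h x * bern m j x))"
    by (simp add: sum_distrib_right mult.assoc)
  then show ?thesis
    by (simp add: wip_eq_wintegral wintegral_sum wintegrable_cmult wintegrable_bern_product[OF \<alpha> \<beta>]
        wintegral_cmult bern_gram_def)
qed

lemma Beta_shift:
  fixes A B :: real
  assumes A: "A > 0" and B: "B > 0"
  shows "Beta (A + real u) (B + real v) = Beta A B * pochhammer A u * pochhammer B v / pochhammer (A + B) (u + v)"
proof -
  have Gamma_shift: "Gamma (X + real n) = pochhammer X n * Gamma X" if "X > 0" for X :: real and n
  proof -
    have "X \<notin> \<int>\<^sub>\<le>\<^sub>0"
      using that nonpos_Ints_nonpos by fastforce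
    then show ?thesis
      using pochhammer_Gamma[of X n] Gamma_real_pos[OF that] by simp
  qed
  have "Gamma (A + real u + (B + real v)) = pochhammer (A + B) (u + v) * Gamma (A + B)"
    using Gamma_shift[of "A + B" "u + v"] A B by (simp add: add_ac)
  moreover have "pochhammer (A + B) (u + v) > 0" "Gamma (A + B) > 0"
    using A B by (simp_all add: pochhammer_pos Gamma_real_pos)
  ultimately show ?thesis
    using Gamma_shift[OF A, of u] Gamma_shift[OF B, of v] by (simp add: Beta_def field_simps)
qed

lemma bern_gram_closed_form:
  fixes \<alpha> \<beta> :: real
  assumes \<alpha>: "\<alpha> > -1" and \<beta>: "\<beta> > -1" and klm: "k + l \<le> m" and hm: "h \<le> m"
    and t: "t \<in> {k..m-l}"
  shows "bern_gram m \<alpha> \<beta> h t =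
     Beta (\<beta> + real k + 1) (\<alpha> + real l + 1) / pochhammer (\<beta> + real k + 1 + (\<alpha> + real l + 1)) (2 * m - k - l)
     * (real (m choose h) * real (m choose t) * pochhammer (\<beta> + real k + 1) (h + t - k)
        * pochhammer (\<alpha> + real l + 1) (2 * m - h - t - l))"
proof -
  have kt: "k \<le> t" and tl: "t + l \<le> m"
    using t klm by auto
  have "bern m h x * bern m t x = (real (m choose h) * real (m choose t)) * (x ^ (h + t) * (1 - x) ^ (2 * m - h - t))" for x
  proof -
    have "2 * m - h - t = (m - h) + (m - t)"
      using hm tl by simp
    then show ?thesis by (simp add: bern_def power_add mult_ac)
  qed
  then have "bern_gram m \<alpha> \<beta> h t
      = real (m choose h) * real (m choose t) * Beta (\<beta> + real (h + t) + 1) (\<alpha> + real (2 * m - h - t) + 1)"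
    by (simp add: bern_gram_def wintegral_cmult wintegral_beta[OF \<alpha> \<beta>])
  also have "Beta (\<beta> + real (h + t) + 1) (\<alpha> + real (2 * m - h - t) + 1)
      = Beta ((\<beta> + real k + 1) + real (h + t - k)) ((\<alpha> + real l + 1) + real (2 * m - h - t - l))"
    using kt tl hm by (simp add: of_nat_diff algebra_simps)
  also have "\<dots> = Beta (\<beta> + real k + 1) (\<alpha> + real l + 1) * pochhammer (\<beta> + real k + 1) (h + t - k)
     * pochhammer (\<alpha> + real l + 1) (2 * m - h - t - l)
     / pochhammer (\<beta> + real k + 1 + (\<alpha> + real l + 1)) ((h + t - k) + (2 * m - h - t - l))"
    by (rule Beta_shift) (use \<alpha> \<beta> in auto)
  also have "(h + t - k) + (2 * m - h - t - l) = 2 * m - k - l"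
    using kt tl hm by simp
  finally show ?thesis by simp
qed

text \<open>The Gram matrix restricted to the free indices is positive definite, because
  <Q, Q> = 0 forces the polynomial Q = sum c_h B^m_h to vanish.\<close>
lemma bern_gram_positive_definite:
  fixes c :: "nat \<Rightarrow> real"
  assumes \<alpha>: "\<alpha> > -1" and \<beta>: "\<beta> > -1"
    and hom: "\<forall>j\<in>{k..m-l}. (\<Sum>h=k..m-l. c h * bern_gram m \<alpha> \<beta> h j) = 0"
    and h: "h \<in> {k..m-l}"
  shows "c h = 0"
proof -
  define c' where "c' i = (if i \<in> {k..m-l} then c i else 0)" for i
  have poly_Q: "poly (bezier_poly m c') x = (\<Sum>h=k..m-l. c h * bern m h x)" for x
    unfolding poly_bezier_poly by (rule sum.mono_neutral_cong_right) (auto simp: c'_def)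
  have "(\<lambda>x. poly (bezier_poly m c') x * poly (bezier_poly m c') x)
      = (\<lambda>x. \<Sum>j=k..m-l. \<Sum>h=k..m-l. (c j * c h) * (bern m h x * bern m j x))"
    by (simp add: poly_Q sum_product mult_ac)
  then have "wintegral \<alpha> \<beta> (\<lambda>x. poly (bezier_poly m c') x * poly (bezier_poly m c') x)
      = (\<Sum>j=k..m-l. \<Sum>h=k..m-l. (c j * c h) * bern_gram m \<alpha> \<beta> h j)"
    by (simp add: wintegral_sum wintegrable_sum wintegrable_cmult wintegrable_bern_product[OF \<alpha> \<beta>]
        wintegral_cmult bern_gram_def)
  also have "\<dots> = (\<Sum>j=k..m-l. c j * (\<Sum>h=k..m-l. c h * bern_gram m \<alpha> \<beta> h j))"
    by (simp add: sum_distrib_left mult_ac)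
  also have "\<dots> = 0"
    using hom by simp
  finally have "bezier_poly m c' = 0"
    by (rule wintegral_poly_square_eq_0[OF \<alpha> \<beta>])
  then have "c' h = 0"
    by (rule bezier_poly_eq_0D) (use h in auto)
  with h show ?thesis by (simp add: c'_def)
qed


section \<open>Interpolation and the outer rows of the Gram matrix\<close>

lemma poly_pochhammer: "poly (pochhammer p n) x = pochhammer (poly p x) n" for p :: "real poly"
  by (induction n) (simp_all add: pochhammer_Suc of_nat_poly)

lemma degree_pochhammer_le: "degree p \<le> 1 \<Longrightarrow> degree (pochhammer p n) \<le> n" for p :: "real poly"
proof (induction n)
  case (Suc n)
  have "degree (pochhammer p (Suc n)) \<le> degree (pochhammer p n) + degree (p + of_nat n)"
    unfolding pochhammer_Suc by (rule degree_mult_le)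
  also have "degree (p + of_nat n) \<le> 1"
    using Suc.prems by (intro order.trans[OF degree_add_le_max]) (auto simp: of_nat_poly)
  finally show ?case using Suc by simp
qed simp

lemma prod_node_differences:
  assumes "r < n"
  shows "(\<Prod>s\<in>{..<n}-{r}. (real r - real s)) = (-1) ^ (n - 1 - r) * fact r * fact (n - 1 - r)"
proof -
  have lower: "(\<Prod>s<r. (real r - real s)) = fact r"
  proof -
    have "(\<Prod>s<r. (real r - real s)) = real (\<Prod>s<r. r - s)"
      by (simp add: of_nat_diff)
    then show ?thesis by (simp add: fact_prod_rev lessThan_atLeast0)
  qed
  have "(\<Prod>s\<in>{Suc r..<n}. (real r - real s)) = (\<Prod>j<n - 1 - r. - (real j + 1))"
    by (rule prod.reindex_bij_witness[of _ "\<lambda>j. Suc r + j" "\<lambda>s. s - Suc r"]) (use assms in auto)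
  also have "\<dots> = (-1) ^ (n - 1 - r) * (\<Prod>j<n - 1 - r. (real j + 1))"
    by (simp only: prod_uminus card_lessThan)
  also have "(\<Prod>j<n - 1 - r. (real j + 1)) = fact (n - 1 - r)"
    by (simp add: pochhammer_fact pochhammer_prod lessThan_atLeast0 add.commute)
  finally have upper: "(\<Prod>s\<in>{Suc r..<n}. (real r - real s)) = (-1) ^ (n - 1 - r) * fact (n - 1 - r)" .
  have split: "{..<n}-{r} = {..<r} \<union> {Suc r..<n}"
    using assms by auto
  have "(\<Prod>s\<in>{..<n}-{r}. (real r - real s))
               = (\<Prod>s<r. (real r - real s)) * (\<Prod>s\<in>{Suc r..<n}. (real r - real s))"
    unfolding split by (rule prod.union_disjoint) auto
  then show ?thesis
    by (simp add: lower upper)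
qed

text \<open>The Lagrange basis polynomial of the node r among the nodes 0, ..., n-1, up to
  normalisation: it vanishes at every other node.\<close>
definition node_poly :: "nat \<Rightarrow> nat \<Rightarrow> real poly" where
  "node_poly n r = (\<Prod>s\<in>{..<n}-{r}. [:- real s, 1:])"

lemma poly_node_poly: "poly (node_poly n r) x = (\<Prod>s\<in>{..<n}-{r}. (x - real s))"
  by (simp add: node_poly_def poly_prod)

lemma lagrange_interpolation:
  fixes Q :: "real poly"
  assumes deg: "degree Q < n"
  shows "Q = (\<Sum>r<n. Polynomial.smult (poly Q (real r) / (\<Prod>s\<in>{..<n}-{r}. (real r - real s))) (node_poly n r))"
    (is "Q = ?L")
proof (rule ccontr)
  assume "Q \<noteq> ?L"
  then have R: "Q - ?L \<noteq> 0" by simp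
  have deg_node: "degree (node_poly n r) \<le> n - 1" if "r < n" for r
  proof -
    have "degree (node_poly n r) \<le> (\<Sum>s\<in>{..<n}-{r}. degree [:- real s, 1:])"
      using degree_prod_sum_le[of "{..<n}-{r}" "\<lambda>s. [:- real s, 1:]"] by (simp add: node_poly_def o_def)
    also have "\<dots> = n - 1"
      using that by simp
    finally show ?thesis .
  qed
  have deg_L: "degree ?L \<le> n - 1"
    by (intro degree_sum_le ballI order.trans[OF degree_smult_le] deg_node) auto
  have L_nodes: "poly ?L (real r0) = poly Q (real r0)" if r0: "r0 < n" for r0
  proof -
    have "poly (node_poly n r) (real r0) = 0" if "r \<in> {..<n}-{r0}" for r
      unfolding poly_node_poly using that r0 by (intro prod_zero) auto
    then have "poly ?L (real r0) = poly Q (real r0) / (\<Prod>s\<in>{..<n}-{r0}. (real r0 - real s))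
                                     * poly (node_poly n r0) (real r0)"
      using r0 by (simp add: poly_sum sum.remove[of _ r0])
    moreover have "(\<Prod>s\<in>{..<n}-{r0}. (real r0 - real s)) \<noteq> 0"
      using prod_node_differences[OF r0] by simp
    ultimately show ?thesis
      by (simp add: poly_node_poly)
  qed
  have "n = card (real ` {..<n})"
    by (simp add: card_image)
  also have "\<dots> \<le> card {x. poly (Q - ?L) x = 0}"
    using L_nodes by (intro card_mono poly_roots_finite R) auto
  also have "\<dots> \<le> degree (Q - ?L)"
    by (rule card_poly_roots_bound[OF R])
  also have "\<dots> < n"
    using deg deg_L degree_diff_le_max[of Q ?L] by auto
  finally show False by simp
qed

lemma poly_node_poly_off_nodes:
  assumes rn: "r < n" and yr: "y \<noteq> real r"
  shows "poly (node_poly n r) y = (-1) ^ n * pochhammer (-y) n / (y - real r)"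
proof -
  have "pochhammer (-y) n = (\<Prod>s<n. - (y - real s))"
    by (simp add: pochhammer_prod lessThan_atLeast0)
  also have "\<dots> = (-1) ^ n * (\<Prod>s<n. y - real s)"
    by (simp only: prod_uminus card_lessThan)
  also have "(\<Prod>s<n. y - real s) = (y - real r) * poly (node_poly n r) y"
    using rn by (simp add: poly_node_poly prod.remove[of _ r])
  finally have "(-1) ^ n * pochhammer (-y) n = (-1) ^ n * ((-1) ^ n * ((y - real r) * poly (node_poly n r) y))"
    by simp
  then have "(-1) ^ n * pochhammer (-y) n = (y - real r) * poly (node_poly n r) y"
    by (simp add: mult.assoc[symmetric] power_mult_distrib[symmetric])
  then show ?thesis
    using yr by (simp add: field_simps)
qed

lemma lagrange_interpolation_off_nodes:
  fixes Q :: "real poly"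
  assumes deg: "degree Q < n" and y: "\<forall>r<n. y \<noteq> real r"
  shows "poly Q y = (\<Sum>r<n. poly Q (real r) * (-1) ^ r * pochhammer (-y) n
                         / ((real r - y) * fact r * fact (n - 1 - r)))"
proof -
  have "poly Q y = (\<Sum>r<n. poly Q (real r) / (\<Prod>s\<in>{..<n}-{r}. (real r - real s)) * poly (node_poly n r) y)"
    by (subst lagrange_interpolation[OF deg]) (simp add: poly_sum)
  also have "\<dots> = (\<Sum>r<n. poly Q (real r) * (-1) ^ r * pochhammer (-y) n
                         / ((real r - y) * fact r * fact (n - 1 - r)))"
  proof (intro sum.cong refl)
    fix r assume "r \<in> {..<n}"
    then have rn: "r < n" by simp
    have yr: "y \<noteq> real r"
      using y rn by auto
    have "n = (n - 1 - r) + r + 1"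
      using rn by simp
    then have "(-1::real) ^ n = (-1) ^ ((n - 1 - r) + r + 1)"
      by metis
    then have sign: "(-1::real) ^ n = (-1) ^ (n - 1 - r) * (-1) ^ r * (-1)"
      by (simp only: power_add power_one_right)
    show "poly Q (real r) / (\<Prod>s\<in>{..<n}-{r}. (real r - real s)) * poly (node_poly n r) y
            = poly Q (real r) * (-1) ^ r * pochhammer (-y) n / ((real r - y) * fact r * fact (n - 1 - r))"
      unfolding poly_node_poly_off_nodes[OF rn yr] prod_node_differences[OF rn] sign using yr
      by (simp add: field_simps)
  qed
  finally show ?thesis .
qed

text \<open>K_ih rescaled by binom(m,i) (\<beta>+k+1)_i (\<alpha>+l+1)_(m-i) is binom(m,h) (\<beta>+k+1)_h (\<alpha>+l+1)_(m-h)
  times the weight of the node i - k in the Lagrange formula at h - k for the nodes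
  0, ..., m-k-l (compare lagrange_interpolation_off_nodes).\<close>
lemma Kcoef_rescaled:
  fixes \<alpha> \<beta> :: real
  assumes \<alpha>: "\<alpha> > -1" and \<beta>: "\<beta> > -1" and i: "i \<in> {k..m-l}" and hi: "h \<noteq> i"
  shows "Kcoef m k l \<alpha> \<beta> i h * (real (m choose i) * pochhammer (\<beta> + real k + 1) i * pochhammer (\<alpha> + real l + 1) (m - i))
       = real (m choose h) * pochhammer (\<beta> + real k + 1) h * pochhammer (\<alpha> + real l + 1) (m - h)
         * ((-1) ^ (i - k) * pochhammer (real k - real h) (m - k - l + 1)
            / ((real i - real h) * fact (i - k) * fact (m - l - i)))"
proof -
  have "real (m choose i) \<noteq> 0" "real i - real h \<noteq> 0"
    using i hi by auto
  moreover have "pochhammer (\<beta> + real k + 1) i \<noteq> 0" "pochhammer (\<alpha> + real l + 1) (m - i) \<noteq> 0"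
    using pochhammer_pos[of "\<beta> + real k + 1" i] pochhammer_pos[of "\<alpha> + real l + 1" "m - i"] \<alpha> \<beta> by auto
  ultimately show ?thesis
    unfolding Kcoef_def by (simp add: field_simps)
qed

text \<open>The identity behind the K_ij: for an outer index h and k \<le> t \<le> m-l,
  binom(m,h) a_(h+t-k) b_(2m-h-t-l) = \<Sum>_{i=k}^{m-l} K_ih binom(m,i) a_(i+t-k) b_(2m-i-t-l)
  with a = (\<beta>+k+1)_., b = (\<alpha>+l+1)_.  After dividing by a_h b_(m-h) it is Lagrange
  interpolation of the polynomial (a+k+x)_(t-k) (b+m-k-x)_(m-t-l) of degree m-k-l at
  the nodes x = 0, ..., m-k-l, evaluated at x = h - k.\<close>
lemma Kcoef_identity:
  fixes \<alpha> \<beta> :: real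
  assumes \<alpha>: "\<alpha> > -1" and \<beta>: "\<beta> > -1" and klm: "k + l \<le> m" and hm: "h \<le> m"
    and hS: "h \<notin> {k..m-l}" and tS: "t \<in> {k..m-l}"
  shows "real (m choose h) * pochhammer (\<beta> + real k + 1) (h + t - k) * pochhammer (\<alpha> + real l + 1) (2 * m - h - t - l)
     = (\<Sum>i=k..m-l. Kcoef m k l \<alpha> \<beta> i h * real (m choose i) * pochhammer (\<beta> + real k + 1) (i + t - k)
            * pochhammer (\<alpha> + real l + 1) (2 * m - i - t - l))"
proof -
  define a0 where "a0 = \<beta> + real k + 1"
  define b0 where "b0 = \<alpha> + real l + 1"
  define n where "n = m - k - l + 1"
  define Q where "Q = pochhammer [:a0 + real k, 1:] (t - k) * pochhammer [:b0 + real m - real k, -1:] (m - t - l)"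
  have poly_Q: "poly Q x = pochhammer (a0 + real k + x) (t - k) * pochhammer (b0 + real m - real k - x) (m - t - l)" for x
    by (simp add: Q_def poly_pochhammer algebra_simps)
  have "degree Q \<le> (t - k) + (m - t - l)"
    unfolding Q_def by (intro order.trans[OF degree_mult_le] add_mono degree_pochhammer_le) auto
  then have deg_Q: "degree Q < n"
    using tS klm unfolding n_def by auto
  define y where "y = real h - real k"
  have y: "\<forall>r<n. y \<noteq> real r"
    using hS klm by (auto simp: y_def n_def)
  have "poly Q y = (\<Sum>r<n. poly Q (real r) * (-1) ^ r * pochhammer (-y) n
                         / ((real r - y) * fact r * fact (n - 1 - r)))"
    by (rule lagrange_interpolation_off_nodes[OF deg_Q y])
  also have "\<dots> = (\<Sum>i=k..m-l. poly Q (real (i - k)) * (-1) ^ (i - k) * pochhammer (real k - real h) n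
                         / ((real i - real h) * fact (i - k) * fact (m - l - i)))"
    by (rule sum.reindex_bij_witness[of _ "\<lambda>i. i - k" "\<lambda>r. k + r"])
       (use klm in \<open>auto simp: n_def y_def of_nat_diff add_ac\<close>)
  finally have interpolation: "poly Q y = (\<Sum>i=k..m-l. poly Q (real (i - k)) * (-1) ^ (i - k)
        * pochhammer (real k - real h) n / ((real i - real h) * fact (i - k) * fact (m - l - i)))" .
  have split_a: "pochhammer a0 (j + t - k) = pochhammer a0 j * pochhammer (a0 + real j) (t - k)" for j
    using pochhammer_product'[of a0 j "t - k"] tS by (simp add: add.commute add.left_commute)
  have split_b: "pochhammer b0 (2 * m - j - t - l) = pochhammer b0 (m - j) * pochhammer (b0 + real (m - j)) (m - t - l)"
    if "j \<le> m" for j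
  proof -
    have "2 * m - j - t - l = (m - j) + (m - t - l)"
      using that tS klm by auto
    then show ?thesis by (simp add: pochhammer_product')
  qed
  have Q_y: "poly Q y = pochhammer (a0 + real h) (t - k) * pochhammer (b0 + real (m - h)) (m - t - l)"
    using hm by (simp add: poly_Q y_def of_nat_diff algebra_simps)
  have lhs: "real (m choose h) * pochhammer a0 (h + t - k) * pochhammer b0 (2 * m - h - t - l)
      = real (m choose h) * pochhammer a0 h * pochhammer b0 (m - h) * poly Q y"
    unfolding split_a split_b[OF hm] Q_y by (simp add: mult_ac)
  have rhs: "Kcoef m k l \<alpha> \<beta> i h * real (m choose i) * pochhammer a0 (i + t - k) * pochhammer b0 (2 * m - i - t - l)
      = real (m choose h) * pochhammer a0 h * pochhammer b0 (m - h) *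
        (poly Q (real (i - k)) * (-1) ^ (i - k) * pochhammer (real k - real h) n
                         / ((real i - real h) * fact (i - k) * fact (m - l - i)))"
    if i: "i \<in> {k..m-l}" for i
  proof -
    have im: "i \<le> m" and ki: "k \<le> i" and hi: "h \<noteq> i"
      using i hS by auto
    have "Kcoef m k l \<alpha> \<beta> i h * real (m choose i) * pochhammer a0 (i + t - k) * pochhammer b0 (2 * m - i - t - l)
        = Kcoef m k l \<alpha> \<beta> i h * (real (m choose i) * pochhammer a0 i * pochhammer b0 (m - i)) * poly Q (real (i - k))"
      unfolding split_a split_b[OF im] using im ki by (simp add: poly_Q of_nat_diff algebra_simps)
    also have "\<dots> = real (m choose h) * pochhammer a0 h * pochhammer b0 (m - h)
         * ((-1) ^ (i - k) * pochhammer (real k - real h) n / ((real i - real h) * fact (i - k) * fact (m - l - i)))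
         * poly Q (real (i - k))"
      by (simp only: Kcoef_rescaled[OF \<alpha> \<beta> i hi, folded a0_def b0_def n_def])
    finally show ?thesis
      by (simp add: mult_ac)
  qed
  show ?thesis
    unfolding a0_def[symmetric] b0_def[symmetric] lhs interpolation sum_distrib_left
    by (rule sum.cong[OF refl], rule rhs[symmetric])
qed

lemma bern_gram_outer_row:
  fixes \<alpha> \<beta> :: real
  assumes \<alpha>: "\<alpha> > -1" and \<beta>: "\<beta> > -1" and klm: "k + l \<le> m" and hm: "h \<le> m"
    and hS: "h \<notin> {k..m-l}" and tS: "t \<in> {k..m-l}"
  shows "bern_gram m \<alpha> \<beta> h t = (\<Sum>i=k..m-l. Kcoef m k l \<alpha> \<beta> i h * bern_gram m \<alpha> \<beta> i t)"
proof -
  define c where "c = Beta (\<beta> + real k + 1) (\<alpha> + real l + 1)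
    / pochhammer (\<beta> + real k + 1 + (\<alpha> + real l + 1)) (2 * m - k - l) * real (m choose t)"
  have "(\<Sum>i=k..m-l. Kcoef m k l \<alpha> \<beta> i h * bern_gram m \<alpha> \<beta> i t)
      = (\<Sum>i=k..m-l. c * (Kcoef m k l \<alpha> \<beta> i h * real (m choose i) * pochhammer (\<beta> + real k + 1) (i + t - k)
            * pochhammer (\<alpha> + real l + 1) (2 * m - i - t - l)))"
    by (intro sum.cong refl) (auto simp: bern_gram_closed_form[OF \<alpha> \<beta> klm _ tS] c_def mult_ac)
  also have "\<dots> = c * (real (m choose h) * pochhammer (\<beta> + real k + 1) (h + t - k)
                      * pochhammer (\<alpha> + real l + 1) (2 * m - h - t - l))"
    by (simp only: sum_distrib_left[symmetric] Kcoef_identity[OF \<alpha> \<beta> klm hm hS tS])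
  also have "\<dots> = bern_gram m \<alpha> \<beta> h t"
    by (simp add: bern_gram_closed_form[OF \<alpha> \<beta> klm hm tS] c_def mult_ac)
  finally show ?thesis by simp
qed


section \<open>The constrained dual Bernstein basis\<close>

lemma square_system_solvable_nat:
  fixes M :: "nat \<Rightarrow> nat \<Rightarrow> real" and e :: "nat \<Rightarrow> real"
  assumes inj: "\<And>v. \<forall>j<n. (\<Sum>b<n. v b * M b j) = 0 \<Longrightarrow> \<forall>b<n. v b = 0"
  shows "\<exists>v. \<forall>j<n. (\<Sum>b<n. v b * M b j) = e j"
proof -
  define A where "A = mat n n (\<lambda>(a, b). M b a)"
  have A: "A \<in> carrier_mat n n"
    by (simp add: A_def)
  have A_mult: "(A *\<^sub>v u) $ a = (\<Sum>b<n. u $ b * M b a)" if "u \<in> carrier_vec n" "a < n" for u a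
    using that by (simp add: A_def scalar_prod_def lessThan_atLeast0 mult.commute)
  have det: "Determinant.det A \<noteq> 0"
  proof
    assume "Determinant.det A = 0"
    then obtain u where u: "u \<in> carrier_vec n" "u \<noteq> 0\<^sub>v n" "A *\<^sub>v u = 0\<^sub>v n"
      using det_0_iff_vec_prod_zero_field[OF A] by blast
    then have "\<forall>j<n. (\<Sum>b<n. u $ b * M b j) = 0"
      by (simp flip: A_mult)
    then have "\<forall>b<n. u $ b = 0"
      by (rule inj)
    with u show False
      by (metis eq_vecI index_zero_vec(1) index_zero_vec(2) carrier_vecD)
  qed
  define B where "B = (1 / Determinant.det A) \<cdot>\<^sub>m adj_mat A"
  have B: "B \<in> carrier_mat n n"
    using adj_mat(1)[OF A] by (simp add: B_def)
  have "A * B = (1 / Determinant.det A) \<cdot>\<^sub>m (A * adj_mat A)"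
    unfolding B_def by (rule mult_smult_distrib[OF A adj_mat(1)[OF A]])
  also have "\<dots> = 1\<^sub>m n"
    using det by (intro eq_matI) (auto simp: adj_mat(2)[OF A])
  finally have AB: "A * B = 1\<^sub>m n" .
  define u where "u = B *\<^sub>v vec n e"
  have u: "u \<in> carrier_vec n"
    using B by (simp add: u_def)
  have "A *\<^sub>v u = (A * B) *\<^sub>v vec n e"
    unfolding u_def by (rule assoc_mult_mat_vec[symmetric, OF A B]) simp
  then have "A *\<^sub>v u = vec n e"
    by (simp add: AB)
  then have "\<forall>j<n. (\<Sum>b<n. u $ b * M b j) = e j"
    using A_mult[OF u] by (metis index_vec)
  then show ?thesis by blast
qed

lemma square_system_solvable:
  fixes M :: "'a \<Rightarrow> 'a \<Rightarrow> real" and e :: "'a \<Rightarrow> real"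
  assumes I: "finite I"
    and inj: "\<And>v. \<forall>j\<in>I. (\<Sum>b\<in>I. v b * M b j) = 0 \<Longrightarrow> \<forall>b\<in>I. v b = 0"
  shows "\<exists>v. \<forall>j\<in>I. (\<Sum>b\<in>I. v b * M b j) = e j"
proof -
  define n where "n = card I"
  obtain g where g: "bij_betw g {..<n} I"
    using ex_bij_betw_nat_finite[OF I] by (auto simp: n_def atLeast0LessThan)
  have enum: "j \<in> I \<longleftrightarrow> (\<exists>j'<n. j = g j')" for j
    using g by (auto simp: bij_betw_def)
  have g_in: "g b \<in> I" if "b < n" for b
    using enum that by blast
  have sum_enum: "(\<Sum>b\<in>I. F b) = (\<Sum>b<n. F (g b))" for F :: "'a \<Rightarrow> real"
    using sum.reindex_bij_betw[OF g, of F] by simp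
  define transfer where "transfer w = w \<circ> inv_into {..<n} g" for w :: "nat \<Rightarrow> real"
  have transfer_g: "transfer w (g b) = w b" if "b < n" for w b
    using g that by (simp add: transfer_def bij_betw_inv_into_left)
  have "\<exists>w. \<forall>j<n. (\<Sum>b<n. w b * M (g b) (g j)) = e (g j)"
  proof (rule square_system_solvable_nat)
    fix w assume "\<forall>j<n. (\<Sum>b<n. w b * M (g b) (g j)) = 0"
    then have "\<forall>j\<in>I. (\<Sum>b\<in>I. transfer w b * M b j) = 0"
      by (auto simp: enum sum_enum transfer_g)
    then have "\<forall>b\<in>I. transfer w b = 0"
      by (rule inj)
    then show "\<forall>b<n. w b = 0"
      using g_in by (metis transfer_g)
  qed
  then obtain w where "\<forall>j<n. (\<Sum>b<n. w b * M (g b) (g j)) = e (g j)"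
    by blast
  then have "\<forall>j\<in>I. (\<Sum>b\<in>I. transfer w b * M b j) = e j"
    by (auto simp: enum sum_enum transfer_g)
  then show ?thesis by blast
qed

definition is_dual_coeffs :: "nat \<Rightarrow> nat \<Rightarrow> nat \<Rightarrow> real \<Rightarrow> real \<Rightarrow> nat \<Rightarrow> (nat \<Rightarrow> real) \<Rightarrow> bool" where
  "is_dual_coeffs m k l \<alpha> \<beta> i c \<longleftrightarrow>
      (\<forall>h. h \<notin> {k..m-l} \<longrightarrow> c h = 0) \<and>
      (\<forall>j\<in>{k..m-l}. wip \<alpha> \<beta> (\<lambda>x. \<Sum>h=k..m-l. c h * bern m h x) (bern m j)
                      = (if i = j then 1 else 0))"

lemma dualC_eq_The: "dualC m k l \<alpha> \<beta> i = (THE c. is_dual_coeffs m k l \<alpha> \<beta> i c)"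
  by (simp add: dualC_def is_dual_coeffs_def)

text \<open>Existence: solve the Gram system on the free indices, which is possible since the
  Gram matrix there is positive definite.\<close>
lemma dual_coeffs_ex1:
  fixes \<alpha> \<beta> :: real
  assumes \<alpha>: "\<alpha> > -1" and \<beta>: "\<beta> > -1" and klm: "k + l \<le> m"
  shows "\<exists>!c. is_dual_coeffs m k l \<alpha> \<beta> i c"
proof -
  define S where "S = {k..m-l}"
  define G where "G = bern_gram m \<alpha> \<beta>"
  have dual_iff: "is_dual_coeffs m k l \<alpha> \<beta> i c \<longleftrightarrow> (\<forall>h. h \<notin> S \<longrightarrow> c h = 0) \<and>
      (\<forall>j\<in>S. (\<Sum>h\<in>S. c h * G h j) = (if i = j then 1 else 0))" for c
    by (simp add: is_dual_coeffs_def wip_bern_combination[OF \<alpha> \<beta>] G_def S_def)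
  have homogeneous: "\<forall>h\<in>S. c h = 0" if "\<forall>j\<in>S. (\<Sum>h\<in>S. c h * G h j) = 0" for c
    using bern_gram_positive_definite[OF \<alpha> \<beta>] that by (auto simp: G_def S_def)
  have "\<exists>c. \<forall>j\<in>S. (\<Sum>h\<in>S. c h * G h j) = (if i = j then 1 else 0)"
    by (rule square_system_solvable[OF _ homogeneous]) (simp add: S_def)
  then obtain c0 where c0: "\<forall>j\<in>S. (\<Sum>h\<in>S. c0 h * G h j) = (if i = j then 1 else 0)"
    by blast
  define c where "c h = (if h \<in> S then c0 h else 0)" for h
  have "(\<Sum>h\<in>S. c h * G h j) = (\<Sum>h\<in>S. c0 h * G h j)" for j
    by (intro sum.cong refl) (simp add: c_def)
  then have c: "is_dual_coeffs m k l \<alpha> \<beta> i c"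
    using c0 by (simp add: dual_iff c_def)
  moreover have "d = c" if d: "is_dual_coeffs m k l \<alpha> \<beta> i d" for d
  proof -
    have "\<forall>j\<in>S. (\<Sum>h\<in>S. (d h - c h) * G h j) = 0"
      using c d by (simp add: dual_iff sum_subtractf left_diff_distrib)
    then have "\<forall>h\<in>S. d h - c h = 0"
      by (rule homogeneous)
    with c d show "d = c"
      by (auto simp: dual_iff fun_eq_iff)
  qed
  ultimately show ?thesis by blast
qed

text \<open>Duality in terms of the Gram matrix: \<Sum>_j C_ij G_hj is \<delta>_ih on the free indices and,
  by the outer-row identity, K_ih on the constrained ones.  In particular
  K_ih = <B^m_h, D_i>.\<close>
lemma dualC_gram_row:
  fixes \<alpha> \<beta> :: real
  assumes \<alpha>: "\<alpha> > -1" and \<beta>: "\<beta> > -1" and klm: "k + l \<le> m"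
    and i: "i \<in> {k..m-l}" and hm: "h \<le> m"
  shows "(\<Sum>j=k..m-l. dualC m k l \<alpha> \<beta> i j * bern_gram m \<alpha> \<beta> h j)
           = (if h \<in> {k..m-l} then (if h = i then 1 else 0) else Kcoef m k l \<alpha> \<beta> i h)"
proof -
  define S where "S = {k..m-l}"
  define C where "C = dualC m k l \<alpha> \<beta> i"
  define G where "G = bern_gram m \<alpha> \<beta>"
  have "is_dual_coeffs m k l \<alpha> \<beta> i C"
    unfolding C_def dualC_eq_The by (rule theI'[OF dual_coeffs_ex1[OF \<alpha> \<beta> klm]])
  then have dual: "(\<Sum>j\<in>S. C j * G j t) = (if t = i then 1 else 0)" if "t \<in> S" for t
    using that by (auto simp: is_dual_coeffs_def wip_bern_combination[OF \<alpha> \<beta>] G_def S_def)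
  show ?thesis
  proof (cases "h \<in> S")
    case True
    then show ?thesis
      using dual[OF True] by (simp add: C_def G_def S_def bern_gram_sym)
  next
    case False
    have row: "G h j = (\<Sum>t\<in>S. Kcoef m k l \<alpha> \<beta> t h * G j t)" if "j \<in> S" for j
      using bern_gram_outer_row[OF \<alpha> \<beta> klm hm False[unfolded S_def] that[unfolded S_def]]
      by (simp add: G_def S_def bern_gram_sym[of m \<alpha> \<beta> _ j])
    have "(\<Sum>j\<in>S. C j * G h j) = (\<Sum>j\<in>S. \<Sum>t\<in>S. Kcoef m k l \<alpha> \<beta> t h * (C j * G j t))"
      by (intro sum.cong refl) (simp add: row sum_distrib_left mult_ac)
    also have "\<dots> = (\<Sum>t\<in>S. Kcoef m k l \<alpha> \<beta> t h * (\<Sum>j\<in>S. C j * G j t))"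
      by (subst sum.swap) (simp add: sum_distrib_left)
    also have "\<dots> = (\<Sum>t\<in>S. if t = i then Kcoef m k l \<alpha> \<beta> t h else 0)"
      by (intro sum.cong refl) (simp add: dual)
    also have "\<dots> = Kcoef m k l \<alpha> \<beta> i h"
      using i by (simp add: S_def)
    finally show ?thesis
      using False by (auto simp: C_def G_def S_def)
  qed
qed


section \<open>Normal equations and the main theorem\<close>

text \<open>If 0 \<le> t^2 c - 2 t b for all real t then b = 0 (take t small with the sign of b).\<close>
lemma quadratic_nonneg_imp_linear_coeff_0:
  fixes b c :: real
  assumes h: "\<And>t. 0 \<le> t * t * c - 2 * t * b" and c: "0 \<le> c"
  shows "b = 0"
proof -
  define s where "s = 1 / (c + 1)"
  have s: "s > 0" and sc: "s * c < 2"
    using c by (simp_all add: s_def field_simps)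
  have "(b * s) * (b * s) * c - 2 * (b * s) * b = (b * b) * (s * (s * c - 2))"
    by (simp add: algebra_simps)
  with h[of "b * s"] have "0 \<le> (b * b) * (s * (s * c - 2))"
    by simp
  moreover have "s * (s * c - 2) < 0"
    using s sc by (simp add: mult_pos_neg)
  ultimately have "b * b \<le> 0"
    by (smt (verit) mult_pos_neg)
  then show ?thesis by (auto simp: mult_le_0_iff)
qed

lemma minimal_residual_orthogonal:
  fixes u B :: "real \<Rightarrow> real"
  assumes uu: "wintegrable \<alpha> \<beta> (\<lambda>x. u x * u x)" and uB: "wintegrable \<alpha> \<beta> (\<lambda>x. u x * B x)"
    and BB: "wintegrable \<alpha> \<beta> (\<lambda>x. B x * B x)"
    and min: "\<And>t. wip \<alpha> \<beta> u u \<le> wip \<alpha> \<beta> (\<lambda>x. u x - t * B x) (\<lambda>x. u x - t * B x)"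
  shows "wintegral \<alpha> \<beta> (\<lambda>x. u x * B x) = 0"
proof (rule quadratic_nonneg_imp_linear_coeff_0[OF _ wintegral_square_nonneg])
  fix t
  have "wip \<alpha> \<beta> u u \<le> wip \<alpha> \<beta> (\<lambda>x. u x - t * B x) (\<lambda>x. u x - t * B x)"
    by (rule min)
  also have "\<dots> = wintegral \<alpha> \<beta> (\<lambda>x. (u x * u x - (2 * t) * (u x * B x)) + (t * t) * (B x * B x))"
    by (simp add: wip_eq_wintegral algebra_simps)
  also have "\<dots> = wip \<alpha> \<beta> u u - 2 * t * wintegral \<alpha> \<beta> (\<lambda>x. u x * B x) + t * t * wintegral \<alpha> \<beta> (\<lambda>x. B x * B x)"
    by (simp add: wintegral_add wintegral_diff wintegrable_diff wintegrable_cmult uu uB BB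
        wintegral_cmult wip_eq_wintegral)
  finally show "0 \<le> t * t * wintegral \<alpha> \<beta> (\<lambda>x. B x * B x) - 2 * t * wintegral \<alpha> \<beta> (\<lambda>x. u x * B x)"
    by simp
qed

text \<open>Normal equations: at an optimal admissible P, the residual f - P is orthogonal to
  each free basis function B^m_j, since t \<mapsto> \<parallel>f - P - t B^m_j\<parallel>^2 is minimal at t = 0.\<close>
lemma normal_equations:
  fixes f :: "real \<Rightarrow> real" and a b p :: "nat \<Rightarrow> real"
  assumes klm: "k + l \<le> m" and \<alpha>: "\<alpha> > -1" and \<beta>: "\<beta> > -1"
    and f_meas: "f \<in> borel_measurable borel"
    and f_L2: "wintegrable \<alpha> \<beta> (\<lambda>x. f x * f x)"
    and adm: "admissible m k l a b p"
    and opt: "\<And>q. admissible m k l a b q \<Longrightarrow>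
               wip \<alpha> \<beta> (\<lambda>x. f x - poly (bezier_poly m p) x) (\<lambda>x. f x - poly (bezier_poly m p) x)
             \<le> wip \<alpha> \<beta> (\<lambda>x. f x - poly (bezier_poly m q) x) (\<lambda>x. f x - poly (bezier_poly m q) x)"
    and j: "j \<in> {k..m-l}"
  shows "wip \<alpha> \<beta> f (bern m j) = (\<Sum>h\<le>m. p h * bern_gram m \<alpha> \<beta> h j)"
proof -
  define P where "P x = poly (bezier_poly m p) x" for x
  define B where "B = bern m j"
  define u where "u x = f x - P x" for x
  have cont_P: "continuous_on UNIV P"
    unfolding P_def poly_bezier_poly by (intro continuous_intros continuous_on_bern)
  have cont_B: "continuous_on UNIV B"
    unfolding B_def by (rule continuous_on_bern)
  have PP: "wintegrable \<alpha> \<beta> (\<lambda>x. P x * P x)" and BB: "wintegrable \<alpha> \<beta> (\<lambda>x. B x * B x)"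
    and PB: "wintegrable \<alpha> \<beta> (\<lambda>x. P x * B x)"
    by (intro wintegrable_continuous \<alpha> \<beta> continuous_on_mult cont_P cont_B)+
  have fP: "wintegrable \<alpha> \<beta> (\<lambda>x. f x * P x)"
    by (rule wintegrable_product[OF f_meas borel_measurable_continuous_onI[OF cont_P] f_L2 PP])
  have fB: "wintegrable \<alpha> \<beta> (\<lambda>x. f x * B x)"
    by (rule wintegrable_product[OF f_meas borel_measurable_continuous_onI[OF cont_B] f_L2 BB])
  have uu: "wintegrable \<alpha> \<beta> (\<lambda>x. u x * u x)"
    using wintegrable_add[OF wintegrable_diff[OF f_L2 wintegrable_cmult[OF fP, of 2]] PP]
    by (simp add: u_def algebra_simps)
  have uB_eq: "(\<lambda>x. u x * B x) = (\<lambda>x. f x * B x - P x * B x)"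
    by (simp add: u_def algebra_simps)
  have uB: "wintegrable \<alpha> \<beta> (\<lambda>x. u x * B x)"
    unfolding uB_eq by (rule wintegrable_diff[OF fB PB])
  have "wintegral \<alpha> \<beta> (\<lambda>x. u x * B x) = 0"
  proof (rule minimal_residual_orthogonal[OF uu uB BB])
    fix t
    have jm: "j \<le> m"
      using j by auto
    have "admissible m k l a b (\<lambda>s. p s + (if s = j then t else 0))"
      by (rule admissible_change_free_coeff[OF adm j klm])
    from opt[OF this] show "wip \<alpha> \<beta> u u \<le> wip \<alpha> \<beta> (\<lambda>x. u x - t * B x) (\<lambda>x. u x - t * B x)"
      using jm by (simp add: poly_bezier_poly_change_coeff u_def[abs_def] P_def B_def algebra_simps)
  qed
  moreover have "wintegral \<alpha> \<beta> (\<lambda>x. u x * B x) = wip \<alpha> \<beta> f B - wip \<alpha> \<beta> P B"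
    unfolding uB_eq wip_eq_wintegral by (rule wintegral_diff[OF fB PB])
  moreover have "wip \<alpha> \<beta> P B = (\<Sum>h\<le>m. p h * bern_gram m \<alpha> \<beta> h j)"
    unfolding P_def[abs_def] B_def poly_bezier_poly by (rule wip_bern_combination[OF \<alpha> \<beta>])
  ultimately show ?thesis
    by (simp add: B_def)
qed

text \<open>Third formula: pair the normal equations with the dual coefficients C_ij; by
  the dual Gram rows, the free terms reduce to p_i and the constrained ones to K_ij.\<close>
lemma free_coeff_formula:
  fixes f :: "real \<Rightarrow> real" and p :: "nat \<Rightarrow> real"
  assumes klm: "k + l \<le> m" and \<alpha>: "\<alpha> > -1" and \<beta>: "\<beta> > -1" and i: "i \<in> {k..m-l}"
    and normal: "\<And>j. j \<in> {k..m-l} \<Longrightarrow> wip \<alpha> \<beta> f (bern m j) = (\<Sum>h\<le>m. p h * bern_gram m \<alpha> \<beta> h j)"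
  shows "p i = (\<Sum>j=k..m-l. dualC m k l \<alpha> \<beta> i j * wip \<alpha> \<beta> f (bern m j))
                 - ((\<Sum>j<k. p j * Kcoef m k l \<alpha> \<beta> i j) + (\<Sum>j=m-l+1..m. p j * Kcoef m k l \<alpha> \<beta> i j))"
proof -
  define S where "S = {k..m-l}"
  define V where "V h = (\<Sum>j\<in>S. dualC m k l \<alpha> \<beta> i j * bern_gram m \<alpha> \<beta> h j)" for h
  have V: "V h = (if h \<in> S then (if h = i then 1 else 0) else Kcoef m k l \<alpha> \<beta> i h)" if "h \<le> m" for h
    unfolding V_def S_def using dualC_gram_row[OF \<alpha> \<beta> klm i that] .
  have split: "{..m} = {..<k} \<union> S \<union> {m-l+1..m}"
    using klm by (auto simp: S_def)
  have "(\<Sum>j\<in>S. dualC m k l \<alpha> \<beta> i j * wip \<alpha> \<beta> f (bern m j))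
          = (\<Sum>j\<in>S. \<Sum>h\<le>m. p h * (dualC m k l \<alpha> \<beta> i j * bern_gram m \<alpha> \<beta> h j))"
    by (simp add: normal S_def sum_distrib_left mult_ac)
  also have "\<dots> = (\<Sum>h\<le>m. p h * V h)"
    by (subst sum.swap) (simp add: V_def sum_distrib_left)
  also have "\<dots> = (\<Sum>h<k. p h * V h) + (\<Sum>h\<in>S. p h * V h) + (\<Sum>h=m-l+1..m. p h * V h)"
    unfolding split using klm by (subst sum.union_disjoint, auto simp: S_def)+
  also have "(\<Sum>h\<in>S. p h * V h) = (\<Sum>h\<in>S. if h = i then p h else 0)"
    by (intro sum.cong refl) (auto simp: V S_def)
  also have "\<dots> = p i"
    using i by (simp add: S_def)
  also have "(\<Sum>h<k. p h * V h) = (\<Sum>h<k. p h * Kcoef m k l \<alpha> \<beta> i h)"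
    using klm by (intro sum.cong refl) (simp add: V S_def)
  also have "(\<Sum>h=m-l+1..m. p h * V h) = (\<Sum>h=m-l+1..m. p h * Kcoef m k l \<alpha> \<beta> i h)"
    using klm by (intro sum.cong refl) (simp add: V S_def)
  finally show ?thesis
    by (simp add: S_def)
qed

theorem theorem4p1:
  fixes m k l :: nat and \<alpha> \<beta> :: real
    and f :: "real \<Rightarrow> real" and a b :: "nat \<Rightarrow> real" and p :: "nat \<Rightarrow> real"
  assumes klm: "k + l \<le> m"
    and \<alpha>: "\<alpha> > -1" and \<beta>: "\<beta> > -1"
    and f_meas: "f \<in> borel_measurable borel"
    and f_L2: "set_integrable lborel {0..1} (\<lambda>x. jweight \<alpha> \<beta> x * f x * f x)"
    and adm: "admissible m k l a b p"
    and opt: "\<And>q. admissible m k l a b q \<Longrightarrow>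
               wip \<alpha> \<beta> (\<lambda>x. f x - poly (bezier_poly m p) x) (\<lambda>x. f x - poly (bezier_poly m p) x)
             \<le> wip \<alpha> \<beta> (\<lambda>x. f x - poly (bezier_poly m q) x) (\<lambda>x. f x - poly (bezier_poly m q) x)"
  shows "(\<forall>i<k. p i = fact (m - i) / fact m * a i
                       - (\<Sum>j<i. (-1) ^ (i + j) * real (i choose j) * p j))
       \<and> (\<forall>i<l. p (m - i) = (-1) ^ i * fact (m - i) / fact m * b i
                       - (\<Sum>j=1..i. (-1) ^ j * real (i choose j) * p (m - i + j)))
       \<and> (\<forall>i\<in>{k..m-l}. p i = (\<Sum>j=k..m-l. dualC m k l \<alpha> \<beta> i j * wip \<alpha> \<beta> f (bern m j))
                       - ((\<Sum>j<k. p j * Kcoef m k l \<alpha> \<beta> i j)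
                          + (\<Sum>j=m-l+1..m. p j * Kcoef m k l \<alpha> \<beta> i j)))"
proof (intro conjI allI impI ballI)
  fix i assume "i < k"
  then show "p i = fact (m - i) / fact m * a i - (\<Sum>j<i. (-1) ^ (i + j) * real (i choose j) * p j)"
    using admissible_coeff_at_0[OF adm] klm by simp
next
  fix i assume "i < l"
  then show "p (m - i) = (-1) ^ i * fact (m - i) / fact m * b i
               - (\<Sum>j=1..i. (-1) ^ j * real (i choose j) * p (m - i + j))"
    using admissible_coeff_at_1[OF adm] klm by simp
next
  fix i assume i: "i \<in> {k..m-l}"
  have "wintegrable \<alpha> \<beta> (\<lambda>x. f x * f x)"
    using f_L2 by (simp add: wintegrable_def set_integrable_def mult.assoc)
  then show "p i = (\<Sum>j=k..m-l. dualC m k l \<alpha> \<beta> i j * wip \<alpha> \<beta> f (bern m j))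
               - ((\<Sum>j<k. p j * Kcoef m k l \<alpha> \<beta> i j) + (\<Sum>j=m-l+1..m. p j * Kcoef m k l \<alpha> \<beta> i j))"
    using free_coeff_formula[OF klm \<alpha> \<beta> i] normal_equations[OF klm \<alpha> \<beta> f_meas _ adm opt] by blast
qed

end
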